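(* Let $n\ge 3$ and let $\mathcal{H}$ be the associating hypergraph on $M(D_n,2)$. Then the matching number is $\upsilon(\mathcal{H})=n+\lfloor n/3\rfloor$.
   Context: $D_n=\langle x,y\mid x^n=y^2=1,\ xy=yx^{-1}\rangle$. $M(D_n,2)=\{(g,\alpha): g\in D_n,\ \alpha\in\mathbb{Z}_2\}$ with $(g_1,\alpha_1)\circ(g_2,\alpha_2)=(g_1^{1-\alpha_2} g_2^{(-1)^{\alpha_1}} g_1^{\alpha_2},\ \alpha_1+\alpha_2)$. The associating hypergraph $\mathcal{H}$ has vertex set $M(D_n,2)$ ($4n$ vertices), and a 3-element set $\{a,b,c\}$ of distinct elements is a hyperedge when $(a\circ b)\circ c=a\circ(b\circ c)$. A matching is a set of pairwise vertex-disjoint hyperedges; $\upsilon(\mathcal{H})$ is the maximum size of a matching. *)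

theory Defs
  imports Main
begin

text \<open>Dihedral group D_n, concretely: the pair (k, s) with k < n, s < 2 stands for x^k y^s.
  Since y x = x^(-1) y, we have x^a y^s * x^b y^t = x^(a + (-1)^s b) y^(s+t).\<close>

type_synonym dih = "nat \<times> nat"

definition dih_carrier :: "nat \<Rightarrow> dih set" where
  "dih_carrier n = {(k, s). k < n \<and> s < 2}"

definition dih_one :: dih where
  "dih_one = (0, 0)"

definition dih_mult :: "nat \<Rightarrow> dih \<Rightarrow> dih \<Rightarrow> dih" where
  "dih_mult n g h = (case g of (a, s) \<Rightarrow> case h of (b, t) \<Rightarrow>
     ((if s = 0 then a + b else a + (n - b)) mod n, (s + t) mod 2))"

definition dih_inv :: "nat \<Rightarrow> dih \<Rightarrow> dih" where
  "dih_inv n g = (case g of (a, s) \<Rightarrow> if s = 0 then ((n - a) mod n, 0) else (a, s))"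

text \<open>M(D_n,2) = D_n x Z_2, with (g1,a1) o (g2,a2) = (g1^(1-a2) g2^((-1)^a1) g1^a2, a1+a2).\<close>

definition M_carrier :: "nat \<Rightarrow> (dih \<times> nat) set" where
  "M_carrier n = {(g, \<alpha>). g \<in> dih_carrier n \<and> \<alpha> < 2}"

definition M_op :: "nat \<Rightarrow> dih \<times> nat \<Rightarrow> dih \<times> nat \<Rightarrow> dih \<times> nat" where
  "M_op n p q = (case p of (g1, a1) \<Rightarrow> case q of (g2, a2) \<Rightarrow>
     (dih_mult n (dih_mult n (if a2 = 0 then g1 else dih_one)
                             (if a1 = 0 then g2 else dih_inv n g2))
                 (if a2 = 0 then dih_one else g1),
      (a1 + a2) mod 2))"

definition assoc_hyperedges :: "nat \<Rightarrow> (dih \<times> nat) set set" where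
  "assoc_hyperedges n = {e. \<exists>a b c. a \<in> M_carrier n \<and> b \<in> M_carrier n \<and> c \<in> M_carrier n \<and>
      a \<noteq> b \<and> a \<noteq> c \<and> b \<noteq> c \<and> e = {a, b, c} \<and>
      M_op n (M_op n a b) c = M_op n a (M_op n b c)}"

definition is_matching :: "nat \<Rightarrow> (dih \<times> nat) set set \<Rightarrow> bool" where
  "is_matching n F \<longleftrightarrow> F \<subseteq> assoc_hyperedges n \<and>
      (\<forall>e\<in>F. \<forall>e'\<in>F. e \<noteq> e' \<longrightarrow> e \<inter> e' = {})"

definition matching_number :: "nat \<Rightarrow> nat" where
  "matching_number n = Max (card ` {F. is_matching n F})"

end

theory Submission
  imports Defs
begin

text \<open>
  M(D_n,2) splits into three sheets: the copy D_n \<times> {0} of the group, the rotations \<times> {1} and the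
  reflections \<times> {1}. The operation is associative on each sheet (on the last two because
  (a \<circ> b) \<circ> c = c b^-1 a and a \<circ> (b \<circ> c) = a b^-1 c agree for rotations and for reflections), so any
  three distinct elements of one sheet form a hyperedge. Every hyperedge uses three of the 4n
  vertices, hence a matching has at most \<lfloor>4n/3\<rfloor> = n + \<lfloor>n/3\<rfloor> edges. Conversely, packing disjoint
  triples into the sheets of sizes 2n, n, n gives n + n/3 edges when 3 divides n; otherwise the
  single transversal hyperedge {(1,0), (1,1), (y,1)} followed by packing the remaining 2n - 1,
  n - 1, n - 1 vertices of the sheets gives n + \<lfloor>n/3\<rfloor> edges as well.
\<close>

lemma card_disjoint_family_le:
  assumes "finite V" "pairwise disjnt F" "\<And>e. e \<in> F \<Longrightarrow> e \<subseteq> V \<and> card e = k"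
  shows "k * card F \<le> card V"
proof -
  have "k * card F = sum card F"
    using assms(3) by simp
  also have "\<dots> = card (\<Union>F)"
    using assms by (metis card_Union_disjoint finite_subset)
  also have "\<dots> \<le> card V"
    using assms by (intro card_mono) auto
  finally show ?thesis .
qed

lemma obtain_disjoint_subsets_with_card:
  assumes "finite S" "0 < k" "k * q \<le> card S"
  obtains F where "card F = q" "pairwise disjnt F" "\<And>e. e \<in> F \<Longrightarrow> e \<subseteq> S \<and> card e = k"
  using assms
proof (induction q arbitrary: S thesis)
  case 0
  then show ?case by (metis card.empty empty_iff pairwise_empty)
next
  case (Suc q)
  obtain T where T: "T \<subseteq> S" "card T = k"
    using Suc.prems(4) by (metis obtain_subset_with_card_n le_add1 mult_Suc_right order_trans)
  have "k * q \<le> card (S - T)"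
    using Suc.prems(2,4) T by (simp add: card_Diff_subset finite_subset)
  then obtain F where F: "card F = q" "pairwise disjnt F" "\<And>e. e \<in> F \<Longrightarrow> e \<subseteq> S - T \<and> card e = k"
    using Suc.IH[of "S - T"] Suc.prems(2,3) by auto
  have "T \<notin> F"
    using F(3) T(2) Suc.prems(3) by (metis Diff_disjoint card.empty inf.orderE less_irrefl)
  moreover have "finite F"
    using F(3) Suc.prems(2) by (meson Diff_subset PowI finite_Pow_iff finite_subset subsetI)
  moreover have "pairwise disjnt (insert T F)"
    using F(2,3) unfolding pairwise_insert disjnt_def by blast
  ultimately show ?case
    using F T by (intro Suc.prems(1)[of "insert T F"]) auto
qed

lemma arith_div3_dvd:
  "3 dvd (n::nat) \<Longrightarrow> 2 * n div 3 + n div 3 + n div 3 = n + n div 3"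
  by (elim dvdE) simp

lemma arith_div3_nondvd:
  assumes "\<not> 3 dvd (n::nat)"
  shows "1 + (2 * n - 1) div 3 + (n - 1) div 3 + (n - 1) div 3 = n + n div 3"
proof -
  define q where "q = n div 3"
  have "n mod 3 = 1 \<or> n mod 3 = 2"
    using assms by (auto simp: dvd_eq_mod_eq_0)
  then consider "n = 3 * q + 1" | "n = 3 * q + 2"
    unfolding q_def by (metis div_mult_mod_eq mult.commute)
  then show ?thesis
  proof cases
    case 1
    have "(2 * n - 1) div 3 = 2 * q"
      by (rule div_nat_eqI) (use 1 in simp)+
    moreover have "(n - 1) div 3 = q"
      by (rule div_nat_eqI) (use 1 in simp)+
    ultimately show ?thesis
      using 1 q_def by linarith
  next
    case 2
    have "(2 * n - 1) div 3 = 2 * q + 1"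
      by (rule div_nat_eqI) (use 2 in simp)+
    moreover have "(n - 1) div 3 = q"
      by (rule div_nat_eqI) (use 2 in simp)+
    ultimately show ?thesis
      using 2 q_def by linarith
  qed
qed

lemma dih_carrier_eq: "dih_carrier n = {..<n} \<times> {..<2}"
  by (auto simp: dih_carrier_def)

lemma M_carrier_eq: "M_carrier n = dih_carrier n \<times> {..<2}"
  by (auto simp: M_carrier_def)

lemma finite_M_carrier: "finite (M_carrier n)"
  by (simp add: M_carrier_eq dih_carrier_eq)

lemma card_M_carrier: "card (M_carrier n) = 4 * n"
  by (simp add: M_carrier_eq dih_carrier_eq card_cartesian_product)

lemma dih_mult_int:
  assumes "b < n"
  shows "dih_mult n (a, s) (b, t) =
    (nat ((int a + (if s = 0 then int b else - int b)) mod int n), (s + t) mod 2)"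
proof -
  have "int ((if s = 0 then a + b else a + (n - b)) mod n)
      = (int a + (if s = 0 then int b else - int b)) mod int n"
    using assms by (simp add: zmod_int of_nat_diff) (metis add_diff_eq mod_add_self2 add.commute)
  then show ?thesis unfolding dih_mult_def by (metis case_prod_conv nat_int)
qed

lemma dih_inv_int:
  assumes "a < n"
  shows "dih_inv n (a, s) = (if s = 0 then (nat ((- int a) mod int n), 0) else (a, s))"
proof -
  have "int ((n - a) mod n) = (int n - int a) mod int n"
    using assms by (simp add: zmod_int of_nat_diff)
  also have "\<dots> = (- int a) mod int n"
    by (metis add.commute diff_conv_add_uminus mod_add_self2)
  finally have "(n - a) mod n = nat ((- int a) mod int n)"
    by (metis nat_int)
  then show ?thesis by (simp add: dih_inv_def)
qed

lemma nat_mod_int_less: "0 < n \<Longrightarrow> nat (x mod int n) < n"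
  by (simp add: nat_less_iff)

lemma M_op_assoc_group_sheet:
  assumes "a < n" "b < n" "c < n" "s < 2" "t < 2" "u < 2"
  shows "M_op n (M_op n ((a, s), 0) ((b, t), 0)) ((c, u), 0)
       = M_op n ((a, s), 0) (M_op n ((b, t), 0) ((c, u), 0))"
proof -
  have "s = 0 \<or> s = 1" "t = 0 \<or> t = 1" "u = 0 \<or> u = 1"
    using assms by auto
  then show ?thesis
    using assms
    by (elim disjE)
      (simp_all add: M_op_def dih_one_def dih_inv_int dih_mult_int nat_mod_int_less mod_simps,
       simp_all add: algebra_simps)
qed

lemma M_op_assoc_rotation_sheet:
  assumes "a < n" "b < n" "c < n"
  shows "M_op n (M_op n ((a, 0), 1) ((b, 0), 1)) ((c, 0), 1)
       = M_op n ((a, 0), 1) (M_op n ((b, 0), 1) ((c, 0), 1))"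
  using assms
  by (simp add: M_op_def dih_one_def dih_inv_int dih_mult_int nat_mod_int_less mod_simps,
      simp add: algebra_simps)

lemma M_op_assoc_reflection_sheet:
  assumes "a < n" "b < n" "c < n"
  shows "M_op n (M_op n ((a, 1), 1) ((b, 1), 1)) ((c, 1), 1)
       = M_op n ((a, 1), 1) (M_op n ((b, 1), 1) ((c, 1), 1))"
  using assms
  by (simp add: M_op_def dih_one_def dih_inv_int dih_mult_int nat_mod_int_less mod_simps,
      simp add: algebra_simps)

definition group_sheet :: "nat \<Rightarrow> (dih \<times> nat) set" where
  "group_sheet n = dih_carrier n \<times> {0}"

definition rotation_sheet :: "nat \<Rightarrow> (dih \<times> nat) set" where
  "rotation_sheet n = ({..<n} \<times> {0}) \<times> {1}"

definition reflection_sheet :: "nat \<Rightarrow> (dih \<times> nat) set" where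
  "reflection_sheet n = ({..<n} \<times> {1}) \<times> {1}"

lemma sheets_disjoint:
  "group_sheet n \<inter> rotation_sheet n = {}"
  "group_sheet n \<inter> reflection_sheet n = {}"
  "rotation_sheet n \<inter> reflection_sheet n = {}"
  by (auto simp: group_sheet_def rotation_sheet_def reflection_sheet_def)

lemma card_group_sheet: "card (group_sheet n) = 2 * n"
  by (simp add: group_sheet_def dih_carrier_eq card_cartesian_product)

lemma card_rotation_sheet: "card (rotation_sheet n) = n"
  by (simp add: rotation_sheet_def card_cartesian_product)

lemma card_reflection_sheet: "card (reflection_sheet n) = n"
  by (simp add: reflection_sheet_def card_cartesian_product)

definition assoc_set :: "nat \<Rightarrow> (dih \<times> nat) set \<Rightarrow> bool" where
  "assoc_set n S \<longleftrightarrow> S \<subseteq> M_carrier n \<and>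
     (\<forall>p\<in>S. \<forall>q\<in>S. \<forall>r\<in>S. M_op n (M_op n p q) r = M_op n p (M_op n q r))"

lemma assoc_set_subset: "assoc_set n S \<Longrightarrow> T \<subseteq> S \<Longrightarrow> assoc_set n T"
  unfolding assoc_set_def by blast

lemma assoc_set_group_sheet: "assoc_set n (group_sheet n)"
  unfolding assoc_set_def group_sheet_def
  by (auto simp: M_carrier_def dih_carrier_def M_op_assoc_group_sheet)

lemma assoc_set_rotation_sheet: "assoc_set n (rotation_sheet n)"
  unfolding assoc_set_def rotation_sheet_def
  by (auto simp: M_carrier_def dih_carrier_def M_op_assoc_rotation_sheet[simplified])

lemma assoc_set_reflection_sheet: "assoc_set n (reflection_sheet n)"
  unfolding assoc_set_def reflection_sheet_def
  by (auto simp: M_carrier_def dih_carrier_def M_op_assoc_reflection_sheet[simplified])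

lemma is_matching_iff: "is_matching n F \<longleftrightarrow> F \<subseteq> assoc_hyperedges n \<and> pairwise disjnt F"
  unfolding is_matching_def pairwise_def disjnt_def by blast

lemma assoc_hyperedgeD: "e \<in> assoc_hyperedges n \<Longrightarrow> e \<subseteq> M_carrier n \<and> card e = 3"
  unfolding assoc_hyperedges_def by auto

lemma finite_assoc_hyperedges: "finite (assoc_hyperedges n)"
proof (rule finite_subset)
  show "assoc_hyperedges n \<subseteq> Pow (M_carrier n)"
    using assoc_hyperedgeD by blast
  show "finite (Pow (M_carrier n))"
    using finite_M_carrier by simp
qed

lemma assoc_hyperedgeI:
  assumes "a \<in> M_carrier n" "b \<in> M_carrier n" "c \<in> M_carrier n"
    and "a \<noteq> b" "a \<noteq> c" "b \<noteq> c"
    and "M_op n (M_op n a b) c = M_op n a (M_op n b c)"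
  shows "{a, b, c} \<in> assoc_hyperedges n"
  unfolding assoc_hyperedges_def using assms by blast

lemma assoc_set_hyperedge:
  assumes "assoc_set n S" "e \<subseteq> S" "card e = 3"
  shows "e \<in> assoc_hyperedges n"
proof -
  obtain a b c where abc: "e = {a, b, c}" "a \<noteq> b" "a \<noteq> c" "b \<noteq> c"
    using assms(3) unfolding card_3_iff by blast
  have "a \<in> S" "b \<in> S" "c \<in> S"
    using assms(2) unfolding abc(1) by simp_all
  then show ?thesis
    using assms(1) abc(2-4) unfolding abc(1) assoc_set_def
    by (intro assoc_hyperedgeI) blast+
qed

lemma transversal_hyperedge:
  assumes "0 < n"
  shows "{((0, 0), 0), ((0, 0), 1), ((0, 1), 1)} \<in> assoc_hyperedges n"
  using assms
  by (intro assoc_hyperedgeI)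
    (simp_all add: M_carrier_def dih_carrier_def M_op_def dih_mult_def dih_inv_def dih_one_def)

lemma matching_card_le:
  assumes "is_matching n F"
  shows "3 * card F \<le> 4 * n"
proof -
  have "F \<subseteq> assoc_hyperedges n" "pairwise disjnt F"
    using assms by (simp_all add: is_matching_iff)
  then have "3 * card F \<le> card (M_carrier n)"
    by (intro card_disjoint_family_le[OF finite_M_carrier]) (auto dest: assoc_hyperedgeD)
  then show ?thesis
    by (simp add: card_M_carrier)
qed

lemma matching_extend:
  assumes F: "is_matching n F" and S: "assoc_set n S" "disjnt (\<Union>F) S"
  obtains G where "is_matching n G" "card G = card F + card S div 3" "\<Union>G \<subseteq> \<Union>F \<union> S"
proof -
  have "finite S"
    using S(1) finite_M_carrier finite_subset unfolding assoc_set_def by blast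
  then obtain E where E: "card E = card S div 3" "pairwise disjnt E"
      "\<And>e. e \<in> E \<Longrightarrow> e \<subseteq> S \<and> card e = 3"
    by (rule obtain_disjoint_subsets_with_card[of S 3 "card S div 3"]) auto
  have E_edges: "E \<subseteq> assoc_hyperedges n"
    using E(3) S(1) assoc_set_hyperedge by blast
  have F_edges: "F \<subseteq> assoc_hyperedges n" "pairwise disjnt F"
    using F by (simp_all add: is_matching_iff)
  have "finite F" "finite E"
    using F_edges(1) E_edges finite_assoc_hyperedges finite_subset by blast+
  have cross: "disjnt e e'" if "e \<in> F" "e' \<in> E" for e e'
    using S(2) E(3)[OF that(2)] that(1) by (meson Union_upper disjnt_subset1 disjnt_subset2)
  have "F \<inter> E = {}"
  proof (intro equals0I)
    fix e assume "e \<in> F \<inter> E"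
    then have "e = {}" "card e = 3"
      using cross[of e e] E(3)[of e] by simp_all
    then show False by simp
  qed
  have "pairwise disjnt (F \<union> E)"
    using F_edges(2) E(2) cross unfolding pairwise_def by (metis Un_iff disjnt_sym)
  then have "is_matching n (F \<union> E)"
    using F_edges(1) E_edges by (simp add: is_matching_iff)
  moreover have "card (F \<union> E) = card F + card S div 3"
    using \<open>finite F\<close> \<open>finite E\<close> \<open>F \<inter> E = {}\<close> E(1) by (simp add: card_Un_disjoint)
  moreover have "\<Union>(F \<union> E) \<subseteq> \<Union>F \<union> S"
    using E(3) by blast
  ultimately show ?thesis
    by (rule that)
qed

lemma matching_from_sheets:
  assumes "is_matching n F"
  obtains G where "is_matching n G"
    "card G = card F + card (group_sheet n - \<Union>F) div 3
      + card (rotation_sheet n - \<Union>F) div 3 + card (reflection_sheet n - \<Union>F) div 3"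
proof -
  let ?U = "\<Union>F"
  have "disjnt ?U (group_sheet n - ?U)"
    by (simp add: disjnt_def)
  obtain G1 where G1: "is_matching n G1" "card G1 = card F + card (group_sheet n - ?U) div 3"
      "\<Union>G1 \<subseteq> ?U \<union> (group_sheet n - ?U)"
    using assms assoc_set_subset[OF assoc_set_group_sheet Diff_subset] \<open>disjnt ?U _\<close>
    by (rule matching_extend)
  have "disjnt (\<Union>G1) (rotation_sheet n - ?U)"
    using G1(3) sheets_disjoint[of n] unfolding disjnt_def by blast
  obtain G2 where G2: "is_matching n G2"
      "card G2 = card G1 + card (rotation_sheet n - ?U) div 3"
      "\<Union>G2 \<subseteq> \<Union>G1 \<union> (rotation_sheet n - ?U)"
    using G1(1) assoc_set_subset[OF assoc_set_rotation_sheet Diff_subset] \<open>disjnt (\<Union>G1) _\<close>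
    by (rule matching_extend)
  have "disjnt (\<Union>G2) (reflection_sheet n - ?U)"
    using G1(3) G2(3) sheets_disjoint[of n] unfolding disjnt_def by blast
  obtain G3 where G3: "is_matching n G3"
      "card G3 = card G2 + card (reflection_sheet n - ?U) div 3"
    using G2(1) assoc_set_subset[OF assoc_set_reflection_sheet Diff_subset] \<open>disjnt (\<Union>G2) _\<close>
    by (rule matching_extend)
  show ?thesis
    using G1(2) G2(2) G3 that by simp
qed

lemma exists_matching_card:
  shows "\<exists>F. is_matching n F \<and> card F = n + n div 3"
proof (cases "3 dvd n")
  case True
  have "is_matching n {}"
    by (simp add: is_matching_iff)
  then obtain G where "is_matching n G"
      "card G = 2 * n div 3 + n div 3 + n div 3"
    by (rule matching_from_sheets)
      (simp add: card_group_sheet card_rotation_sheet card_reflection_sheet)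
  then show ?thesis
    using arith_div3_dvd[OF True] by auto
next
  case False
  then have "0 < n"
    by (metis dvd_0_right gr0I)
  define T where "T = {((0::nat, 0::nat), 0::nat), ((0, 0), 1), ((0, 1), 1)}"
  have "is_matching n {T}"
    using transversal_hyperedge[OF \<open>0 < n\<close>] by (simp add: is_matching_iff T_def)
  moreover have "card (group_sheet n - T) = 2 * n - 1"
  proof -
    have "group_sheet n - T = group_sheet n - {((0, 0), 0)}"
      by (auto simp: group_sheet_def T_def)
    then show ?thesis
      using \<open>0 < n\<close> by (simp add: card_group_sheet group_sheet_def dih_carrier_def)
  qed
  moreover have "card (rotation_sheet n - T) = n - 1"
  proof -
    have "rotation_sheet n - T = rotation_sheet n - {((0, 0), 1)}"
      by (auto simp: rotation_sheet_def T_def)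
    then show ?thesis
      using \<open>0 < n\<close> by (simp add: card_rotation_sheet rotation_sheet_def)
  qed
  moreover have "card (reflection_sheet n - T) = n - 1"
  proof -
    have "reflection_sheet n - T = reflection_sheet n - {((0, 1), 1)}"
      by (auto simp: reflection_sheet_def T_def)
    then show ?thesis
      using \<open>0 < n\<close> by (simp add: card_reflection_sheet reflection_sheet_def)
  qed
  ultimately obtain G where "is_matching n G"
      "card G = 1 + (2 * n - 1) div 3 + (n - 1) div 3 + (n - 1) div 3"
    using matching_from_sheets[of n "{T}"] by auto
  then show ?thesis
    using arith_div3_nondvd[OF False] by auto
qed

theorem mainTheorem10:
  fixes n :: nat
  assumes "n \<ge> 3"
  shows "matching_number n = n + n div 3"
  unfolding matching_number_def
proof (rule Max_eqI)
  have "{F. is_matching n F} \<subseteq> Pow (assoc_hyperedges n)"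
    by (auto simp: is_matching_iff)
  then show "finite (card ` {F. is_matching n F})"
    using finite_assoc_hyperedges by (simp add: finite_subset)
  show "n + n div 3 \<in> card ` {F. is_matching n F}"
    using exists_matching_card by (metis (mono_tags) image_eqI mem_Collect_eq)
  fix k assume "k \<in> card ` {F. is_matching n F}"
  then have "3 * k \<le> 4 * n"
    using matching_card_le by auto
  moreover have "n = 3 * (n div 3) + n mod 3" "n mod 3 < 3"
    by simp_all
  ultimately show "k \<le> n + n div 3"
    by linarith
qed

end
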